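(* (i) If $Q_1,Q_2\in\mathcal{E}_\omega$ then $Q_1\circ Q_2\in\mathcal{E}_\omega$; moreover $Q_1\circ Q_2\in\mathcal{E}_\infty$ whenever $Q_1\in\mathcal{E}_\infty$ or $Q_2\in\mathcal{E}_\infty$. (ii) If $Q\in\mathcal{E}_\infty$ then $Q\,\mathtt{I}\in\mathcal{E}_\infty$.
   Context: $\mathtt{I}=\lambda x.x$, $Q_1\circ Q_2=\mathtt{B}Q_1Q_2$ where $\mathtt{B}=\lambda fgx.f(gx)$. Böhm trees as usual. The relation $\le^\eta_\omega$ is the greatest relation on Böhm-like trees such that $U\le^\eta_\omega V$ implies either $U=V=\bot$, or $U=\lambda x_1\dots x_n.yU_1\cdots U_k$ and $V=\lambda x_1\dots x_nz_1\dots z_m.yV_1\cdots V_kV'_1\cdots V'_m$ with the $z_i$ not free in $yU_1\cdots U_kV_1\cdots V_k$, $U_j\le^\eta_\omega V_j$ and $z_i\le^\eta_\omega V'_i$. $\mathcal{E}_\omega=\{Q: BT(\mathtt{I})\le^\eta_\omega BT(Q)\}$; $\mathcal{E}_\infty$ is the set of $Q\in\mathcal{E}_\omega$ whose Böhm tree is infinite. *)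

theory Defs
  imports Main
begin

datatype trm = Var nat | App trm trm | Abs trm

fun lift :: "trm \<Rightarrow> nat \<Rightarrow> trm" where
  "lift (Var i) k = (if i < k then Var i else Var (Suc i))"
| "lift (App s t) k = App (lift s k) (lift t k)"
| "lift (Abs s) k = Abs (lift s (Suc k))"

fun subst :: "trm \<Rightarrow> trm \<Rightarrow> nat \<Rightarrow> trm" where
  "subst (Var i) s k = (if k < i then Var (i - 1) else if i = k then s else Var i)"
| "subst (App t u) s k = App (subst t s k) (subst u s k)"
| "subst (Abs t) s k = Abs (subst t (lift s 0) (Suc k))"

fun is_abs :: "trm \<Rightarrow> bool" where
  "is_abs (Abs _) = True"
| "is_abs _ = False"

inductive hred :: "trm \<Rightarrow> trm \<Rightarrow> bool" where
  beta: "hred (App (Abs s) t) (subst s t 0)"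
| appL: "hred s s' \<Longrightarrow> \<not> is_abs s \<Longrightarrow> hred (App s t) (App s' t)"
| abs: "hred s s' \<Longrightarrow> hred (Abs s) (Abs s')"

fun nabs :: "trm \<Rightarrow> nat" where
  "nabs (Abs t) = Suc (nabs t)"
| "nabs _ = 0"

fun body :: "trm \<Rightarrow> trm" where
  "body (Abs t) = body t"
| "body t = t"

fun hd_of :: "trm \<Rightarrow> trm" where
  "hd_of (App s t) = hd_of s"
| "hd_of t = t"

fun args_of :: "trm \<Rightarrow> trm list" where
  "args_of (App s t) = args_of s @ [t]"
| "args_of _ = []"

definition hvar :: "trm \<Rightarrow> nat" where
  "hvar t = (case hd_of t of Var i \<Rightarrow> i | _ \<Rightarrow> 0)"

definition is_hnf :: "trm \<Rightarrow> bool" where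
  "is_hnf M \<longleftrightarrow> (\<exists>i. hd_of (body M) = Var i)"

definition has_hnf :: "trm \<Rightarrow> bool" where
  "has_hnf M \<longleftrightarrow> (\<exists>N. hred\<^sup>*\<^sup>* M N \<and> is_hnf N)"

definition hnf_of :: "trm \<Rightarrow> trm" where
  "hnf_of M = (THE N. hred\<^sup>*\<^sup>* M N \<and> is_hnf N)"

text \<open>\<open>Nd n y Ts\<close> is the node \<lambda>x1..xn. y T1 .. Tk, where the head variable y
  is a de Bruijn index counting all enclosing binders (of this node and above).\<close>
codatatype bt = Bot | Nd nat nat "bt list"

primcorec BT :: "trm \<Rightarrow> bt" where
  "BT M = (if has_hnf M
           then Nd (nabs (hnf_of M)) (hvar (body (hnf_of M))) (map BT (args_of (body (hnf_of M))))
           else Bot)"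

primcorec bt_shift :: "nat \<Rightarrow> nat \<Rightarrow> bt \<Rightarrow> bt" where
  "bt_shift k c T = (case T of Bot \<Rightarrow> Bot
     | Nd n y Ts \<Rightarrow> Nd n (if y < c + n then y else y + k) (map (bt_shift k (c + n)) Ts))"

text \<open>U = \<lambda>x1..xn. y U1..Uk,  V = \<lambda>x1..xn z1..zm. y V1..Vk V'1..V'm.
  In de Bruijn notation the head of V is y+m; "z_i not free in V_j" means
  V_j = bt_shift m 0 W_j for some W_j, and U_j is compared with W_j
  (the tree V_j read in the context of U_j); z_i has index m - i.\<close>
coinductive eta_le :: "bt \<Rightarrow> bt \<Rightarrow> bool" where
  bot: "eta_le Bot Bot"
| nd: "list_all2 eta_le Us Ws
       \<Longrightarrow> list_all2 eta_le (map (\<lambda>j. Nd 0 j []) (rev [0..<m])) Vs'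
       \<Longrightarrow> eta_le (Nd n y Us) (Nd (n + m) (y + m) (map (bt_shift m 0) Ws @ Vs'))"

inductive bt_finite :: "bt \<Rightarrow> bool" where
  "bt_finite Bot"
| "(\<And>T. T \<in> set Ts \<Longrightarrow> bt_finite T) \<Longrightarrow> bt_finite (Nd n y Ts)"

definition lamI :: trm where "lamI = Abs (Var 0)"

definition lamB :: trm where "lamB = Abs (Abs (Abs (App (Var 2) (App (Var 1) (Var 0)))))"

definition bcomp :: "trm \<Rightarrow> trm \<Rightarrow> trm" where "bcomp Q1 Q2 = App (App lamB Q1) Q2"

definition E_omega :: "trm set" where "E_omega = {Q. eta_le (BT lamI) (BT Q)}"

definition E_inf :: "trm set" where "E_inf = {Q \<in> E_omega. \<not> bt_finite (BT Q)}"

end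

theory Submission
  imports Defs
begin

text \<open>\<open>Q \<in> E_omega\<close> means that \<open>Q\<close> head-reduces to \<open>\<lambda>x. t\<close> with \<open>t\<close> an infinite
  \<eta>-expansion of \<open>x\<close>: \<open>t\<close> head-reduces to \<open>\<lambda>z\<^sub>1\<dots>z\<^sub>m. x t\<^sub>1 \<dots> t\<^sub>m\<close> where each \<open>t\<^sub>i\<close> is again
  an \<eta>-expansion of \<open>z\<^sub>i\<close>, and so on forever. Finite approximations of this are recorded by
  shapes (finite trees). The heart of the proof is that substitution composes expansions: if
  \<open>M\<close> expands \<open>x\<close> along \<open>S\<close> and \<open>N\<close> expands \<open>y\<close> along \<open>T\<close>, then \<open>M[N/x]\<close> expands \<open>y\<close>
  along a merged shape, which is complete to depth \<open>n\<close> when \<open>S\<close> and \<open>T\<close> are, and has a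
  branch of depth \<open>n\<close> when one of them has. Now \<open>Q\<^sub>1 \<circ> Q\<^sub>2\<close> head-reduces to
  \<open>\<lambda>x. Q\<^sub>1 (Q\<^sub>2 x)\<close>, which is a double substitution into the expansions given by \<open>Q\<^sub>1\<close> and
  \<open>Q\<^sub>2\<close>; and \<open>Q I\<close> head-reduces to \<open>\<lambda>z\<^sub>2\<dots>z\<^sub>m. t\<^sub>1 t\<^sub>2 \<dots> t\<^sub>m\<close> (with \<open>I\<close> substituted), which
  again is a substitution of expansions. Infinite Boehm trees are exactly those along which
  the shapes have branches of unbounded depth.\<close>

section \<open>Head reduction of de Bruijn terms\<close>

lemma lift_lift:
  "i < k + 1 \<Longrightarrow> lift (lift t i) (Suc k) = lift (lift t k) i"
  by (induct t arbitrary: i k) auto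

lemma lift_subst [simp]:
  "j < i + 1 \<Longrightarrow> lift (subst t s j) i = subst (lift t (i + 1)) (lift s i) j"
  by (induct t arbitrary: i j s) (simp_all add: diff_Suc lift_lift split: nat.split)

lemma lift_subst_lt:
  "i < j + 1 \<Longrightarrow> lift (subst t s j) i = subst (lift t i) (lift s i) (j + 1)"
  by (induct t arbitrary: i j s) (auto simp: lift_lift)

lemma subst_lift [simp]: "subst (lift t k) s k = t"
  by (induct t arbitrary: k s) simp_all

lemma subst_subst:
  "i < j + 1 \<Longrightarrow> subst (subst t (lift v i) (Suc j)) (subst u v j) i = subst (subst t u i) v j"
  by (induct t arbitrary: i j u v)
    (simp_all add: diff_Suc lift_lift [symmetric] lift_subst_lt split: nat.split)

fun absn :: "nat \<Rightarrow> trm \<Rightarrow> trm" where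
  "absn 0 t = t"
| "absn (Suc n) t = Abs (absn n t)"

fun apps :: "trm \<Rightarrow> trm list \<Rightarrow> trm" where
  "apps t [] = t"
| "apps t (u # us) = apps (App t u) us"

fun liftn :: "nat \<Rightarrow> trm \<Rightarrow> trm" where
  "liftn 0 t = t"
| "liftn (Suc n) t = liftn n (lift t 0)"

lemma apps_snoc [simp]: "apps t (us @ [u]) = App (apps t us) u"
  by (induct us arbitrary: t) auto

lemma absn_add: "absn (m + n) t = absn m (absn n t)"
  by (induct m) auto

lemma lift_absn: "lift (absn n t) k = absn n (lift t (k + n))"
  by (induct n arbitrary: k) auto

lemma subst_absn: "subst (absn n t) s k = absn n (subst t (liftn n s) (k + n))"
  by (induct n arbitrary: k s) auto

lemma lift_apps: "lift (apps t us) k = apps (lift t k) (map (\<lambda>u. lift u k) us)"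
  by (induct us arbitrary: t) auto

lemma subst_apps: "subst (apps t us) s k = apps (subst t s k) (map (\<lambda>u. subst u s k) us)"
  by (induct us arbitrary: t) auto

lemma is_abs_apps_Var [simp]: "\<not> is_abs (apps (Var j) Ms)"
  by (induct Ms rule: rev_induct) auto

lemma nabs_absn_apps_Var [simp]: "nabs (absn m (apps (Var j) Ms)) = m"
proof -
  have "nabs (apps (Var j) Ms) = 0" by (induct Ms rule: rev_induct) auto
  then show ?thesis by (induct m) auto
qed

lemma body_absn_apps_Var [simp]: "body (absn m (apps (Var j) Ms)) = apps (Var j) Ms"
proof -
  have "body (apps (Var j) Ms) = apps (Var j) Ms" by (induct Ms rule: rev_induct) auto
  then show ?thesis by (induct m) auto
qed

lemma hd_of_apps [simp]: "hd_of (apps t Ms) = hd_of t"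
  by (induct Ms arbitrary: t) auto

lemma args_of_apps [simp]: "args_of (apps t Ms) = args_of t @ Ms"
  by (induct Ms arbitrary: t) auto

lemma absn_apps_Var_inject:
  assumes "absn m (apps (Var j) Ms) = absn m' (apps (Var j') Ms')"
  shows "m = m' \<and> j = j' \<and> Ms = Ms'"
proof -
  have "m = m'" using arg_cong[OF assms, of nabs] by simp
  moreover have "hd_of (body (absn m (apps (Var j) Ms))) = hd_of (body (absn m' (apps (Var j') Ms')))"
    and "args_of (body (absn m (apps (Var j) Ms))) = args_of (body (absn m' (apps (Var j') Ms')))"
    using assms by simp_all
  ultimately show ?thesis by simp
qed

lemma is_hnf_absn_apps_Var: "is_hnf (absn m (apps (Var j) Ms))"
  by (simp add: is_hnf_def)

lemma hnf_eq_absn_apps_Var: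
  assumes "is_hnf H"
  shows "H = absn (nabs H) (apps (Var (hvar (body H))) (args_of (body H)))"
proof -
  have absn_body: "absn (nabs t) (body t) = t" for t
    by (induct t) simp_all
  have apps_hd_args: "apps (hd_of t) (args_of t) = t" for t
    by (induct t) simp_all
  from assms obtain i where i: "hd_of (body H) = Var i" unfolding is_hnf_def by blast
  then have "body H = apps (Var i) (args_of (body H))" using apps_hd_args[of "body H"] by simp
  moreover have "hvar (body H) = i" using i by (simp add: hvar_def)
  ultimately show ?thesis using absn_body[of H] by simp
qed

lemma is_abs_lift [simp]: "is_abs (lift s k) = is_abs s"
  by (cases s) auto

lemma hred_lift: "hred s t \<Longrightarrow> hred (lift s k) (lift t k)"
proof (induct arbitrary: k rule: hred.induct)
  case (beta s t)
  then show ?case using hred.beta[of "lift s (Suc k)" "lift t k"] by simp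
qed (auto intro: hred.intros)

lemma not_hred_Var: "\<not> hred (Var i) t"
  by (auto elim: hred.cases)

lemma hred_subst: "hred s t \<Longrightarrow> hred (subst s u k) (subst t u k)"
proof (induct arbitrary: k u rule: hred.induct)
  case (beta s t)
  then show ?case
    using hred.beta[of "subst s (lift u 0) (Suc k)" "subst t u k"] subst_subst[of 0 k s u t] by simp
next
  case (appL s s' t)
  then have "\<not> is_abs (subst s u k)" by (cases s) (auto simp: not_hred_Var)
  then show ?case using appL by (auto intro: hred.appL)
qed (auto intro: hred.intros)

lemma hreds_lift: "hred\<^sup>*\<^sup>* s t \<Longrightarrow> hred\<^sup>*\<^sup>* (lift s k) (lift t k)"
  by (induct rule: rtranclp_induct) (auto intro: rtranclp.rtrancl_into_rtrancl hred_lift)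

lemma hreds_subst: "hred\<^sup>*\<^sup>* s t \<Longrightarrow> hred\<^sup>*\<^sup>* (subst s u k) (subst t u k)"
  by (induct rule: rtranclp_induct) (auto intro: rtranclp.rtrancl_into_rtrancl hred_subst)

lemma hreds_Abs: "hred\<^sup>*\<^sup>* s t \<Longrightarrow> hred\<^sup>*\<^sup>* (Abs s) (Abs t)"
  by (induct rule: rtranclp_induct) (auto intro: rtranclp.rtrancl_into_rtrancl hred.abs)

lemma hreds_absn: "hred\<^sup>*\<^sup>* s t \<Longrightarrow> hred\<^sup>*\<^sup>* (absn n s) (absn n t)"
  by (induct n) (auto intro: hreds_Abs)

inductive_cases hred_AppE: "hred (App s t) u"
inductive_cases hred_AbsE: "hred (Abs s) u"

lemma hred_deterministic: "hred s t \<Longrightarrow> hred s t' \<Longrightarrow> t = t'"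
proof (induct arbitrary: t' rule: hred.induct)
  case (beta s t)
  from beta show ?case
  proof (rule hred_AppE)
    fix s0 assume "Abs s = Abs s0" "t' = subst s0 t 0"
    then show ?thesis by simp
  next
    fix s'' assume "\<not> is_abs (Abs s)"
    then show ?thesis by simp
  qed
next
  case (appL s s' t)
  from appL.prems show ?case
  proof (rule hred_AppE)
    fix s0 assume "s = Abs s0" 
    then show ?thesis using appL.hyps(3) by simp
  next
    fix s'' assume a: "t' = App s'' t" "hred s s''"
    have "s' = s''" using appL.hyps(2) a(2) by metis
    then show ?thesis using a(1) by simp
  qed
next
  case (abs s s')
  from abs.prems show ?case
  proof (rule hred_AbsE)
    fix s'' assume a: "t' = Abs s''" "hred s s''"
    have "s' = s''" using abs.hyps(2) a(2) by metis
    then show ?thesis using a(1) by simp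
  qed
qed

lemma hnf_no_hred: "hred s t \<Longrightarrow> \<not> is_hnf s"
proof (induct rule: hred.induct)
  case (appL s s' t)
  then show ?case by (cases s) (auto simp: is_hnf_def)
qed (simp_all add: is_hnf_def)

lemma hreds_from_hnf: "hred\<^sup>*\<^sup>* s t \<Longrightarrow> is_hnf s \<Longrightarrow> t = s"
  by (induct rule: converse_rtranclp_induct) (auto dest: hnf_no_hred)

lemma hreds_hnf_unique:
  "hred\<^sup>*\<^sup>* a b \<Longrightarrow> hred\<^sup>*\<^sup>* a c \<Longrightarrow> is_hnf b \<Longrightarrow> is_hnf c \<Longrightarrow> b = c"
proof (induct arbitrary: c rule: converse_rtranclp_induct)
  case base
  then show ?case using hreds_from_hnf by metis
next
  case (step a a1)
  note a_a1 = step.hyps(1) and IH = step.hyps(3) and hnfs = step.prems(2,3)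
  from step.prems(1) show ?case
  proof (cases rule: converse_rtranclpE)
    case base
    then show ?thesis using a_a1 hnfs hnf_no_hred by blast
  next
    case (step a2)
    then have "hred\<^sup>*\<^sup>* a1 c" using hred_deterministic a_a1 by metis
    then show ?thesis using IH hnfs by blast
  qed
qed

lemma hreds_AbsD: "hred\<^sup>*\<^sup>* (Abs a) b \<Longrightarrow> \<exists>c. b = Abs c \<and> hred\<^sup>*\<^sup>* a c"
proof (induct rule: rtranclp_induct)
  case (step y z)
  then show ?case by (auto elim: hred_AbsE intro: rtranclp.rtrancl_into_rtrancl)
qed blast

lemma hreds_App_Abs: "hred\<^sup>*\<^sup>* P (Abs T) \<Longrightarrow> hred\<^sup>*\<^sup>* (App P V) (subst T V 0)"
proof (induct rule: converse_rtranclp_induct)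
  case base
  then show ?case by (rule r_into_rtranclp) (rule hred.beta)
next
  case (step y z)
  show ?case
  proof (cases "is_abs y")
    case True
    then obtain y0 where y: "y = Abs y0" by (cases y) auto
    with step.hyps(1) obtain z0 where z: "z = Abs z0" "hred y0 z0" by (auto elim: hred_AbsE)
    with step.hyps(2) have "hred\<^sup>*\<^sup>* y0 T"
      by (auto dest: hreds_AbsD intro: converse_rtranclp_into_rtranclp)
    then have "hred\<^sup>*\<^sup>* (subst y0 V 0) (subst T V 0)" by (rule hreds_subst)
    then show ?thesis unfolding y by (blast intro: converse_rtranclp_into_rtranclp hred.beta)
  next
    case False
    with step.hyps(1) have "hred (App y V) (App z V)" by (rule hred.appL)
    then show ?thesis using step.hyps(3) by (rule converse_rtranclp_into_rtranclp)
  qed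
qed

lemma hreds_App: "hred\<^sup>*\<^sup>* P P' \<Longrightarrow> \<not> is_abs P' \<Longrightarrow> hred\<^sup>*\<^sup>* (App P V) (App P' V)"
proof (induct rule: rtranclp_induct)
  case (step y z)
  have "\<not> is_abs y"
    using step.hyps(2) step.prems by (cases y) (auto elim: hred_AbsE)
  with step.hyps(2) have "hred (App y V) (App z V)" by (rule hred.appL)
  then show ?case using step.hyps(3)[OF \<open>\<not> is_abs y\<close>] by (rule rtranclp.rtrancl_into_rtrancl[rotated])
qed simp

lemma hred_apps: "hred s s' \<Longrightarrow> \<not> is_abs s \<Longrightarrow> hred (apps s us) (apps s' us)"
proof (induct us arbitrary: s s')
  case (Cons u us)
  then show ?case by (simp add: hred.appL)
qed simp

lemma BT_of_hreds_hnf: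
  assumes "hred\<^sup>*\<^sup>* M (absn m (apps (Var j) Ms))"
  shows "BT M = Nd m j (map BT Ms)"
proof -
  let ?H = "absn m (apps (Var j) Ms)"
  have "has_hnf M" using assms is_hnf_absn_apps_Var unfolding has_hnf_def by blast
  moreover have "hnf_of M = ?H" unfolding hnf_of_def
  proof (rule the_equality)
    show "hred\<^sup>*\<^sup>* M ?H \<and> is_hnf ?H" using assms is_hnf_absn_apps_Var by simp
  qed (use hreds_hnf_unique[OF _ assms _ is_hnf_absn_apps_Var] in simp)
  ultimately show ?thesis using BT.code[of M] by (simp add: hvar_def)
qed

lemma BT_NdE:
  assumes "BT M = Nd a j Ts"
  obtains Ms where "hred\<^sup>*\<^sup>* M (absn a (apps (Var j) Ms))" and "Ts = map BT Ms"
proof -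
  have "has_hnf M" using assms BT.code[of M] by (metis bt.distinct(1))
  then have "\<exists>!N. hred\<^sup>*\<^sup>* M N \<and> is_hnf N"
    unfolding has_hnf_def using hreds_hnf_unique by blast
  then have "hred\<^sup>*\<^sup>* M (hnf_of M) \<and> is_hnf (hnf_of M)"
    unfolding hnf_of_def by (rule theI')
  then have r: "hred\<^sup>*\<^sup>* M (hnf_of M)" and hnf: "is_hnf (hnf_of M)" by simp_all
  let ?H = "hnf_of M"
  have r': "hred\<^sup>*\<^sup>* M (absn (nabs ?H) (apps (Var (hvar (body ?H))) (args_of (body ?H))))"
    using r hnf_eq_absn_apps_Var[OF hnf] by simp
  have "Nd a j Ts = Nd (nabs ?H) (hvar (body ?H)) (map BT (args_of (body ?H)))"
    using assms BT_of_hreds_hnf[OF r'] by simp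
  then show ?thesis using that r' by auto
qed

lemma BT_lamI: "BT lamI = Nd 1 0 []"
  using BT_of_hreds_hnf[of lamI 1 0 "[]"] by (simp add: lamI_def)

section \<open>Shapes of \<eta>-expansions\<close>

text \<open>A shape records to which depth a term has been checked to be an \<eta>-expansion of a
  variable; \<open>Leaf\<close> imposes no condition.\<close>

datatype shape = Leaf | Node "shape list"

lemma size_nth_less: "i < length Ss \<Longrightarrow> size (Ss ! i) < Suc (size_list size Ss)"
  using size_list_estimation'[of "Ss ! i" Ss "size (Ss ! i)" size] by simp

function eta_exp :: "shape \<Rightarrow> nat \<Rightarrow> trm \<Rightarrow> bool" where
  "eta_exp Leaf x M = True"
| "eta_exp (Node Ss) x M \<longleftrightarrow>
    (\<exists>Ms. hred\<^sup>*\<^sup>* M (absn (length Ss) (apps (Var (x + length Ss)) Ms)) \<and> length Ms = length Ss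
       \<and> (\<forall>i<length Ss. eta_exp (Ss ! i) (length Ss - 1 - i) (Ms ! i)))"
  by pat_completeness auto
termination
  by (relation "measure (\<lambda>(S, x, M). size S)") (auto simp: size_nth_less)

text \<open>The shape of \<open>M[N/x]\<close> built from the shapes \<open>S\<close> of \<open>M\<close> (expanding \<open>x\<close>) and \<open>T\<close> of \<open>N\<close>.\<close>

function merge :: "shape \<Rightarrow> shape \<Rightarrow> shape" where
  "merge Leaf T = Leaf"
| "merge (Node Ss) Leaf = Leaf"
| "merge (Node Ss) (Node Ts) = Node (map (\<lambda>j. if j < length Ss then if j < length Ts
      then merge (Ts ! j) (Ss ! j) else Ss ! j else Ts ! j) [0..<max (length Ss) (length Ts)])"
  by pat_completeness auto
termination
  by (relation "measure (\<lambda>(S, T). size S + size T)") (auto dest!: size_nth_less)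

fun shape_full :: "nat \<Rightarrow> shape \<Rightarrow> bool" where
  "shape_full 0 S = True"
| "shape_full (Suc n) Leaf = False"
| "shape_full (Suc n) (Node Ss) = (\<forall>S\<in>set Ss. shape_full n S)"

fun shape_deep :: "nat \<Rightarrow> shape \<Rightarrow> bool" where
  "shape_deep 0 S = True"
| "shape_deep (Suc n) Leaf = False"
| "shape_deep (Suc n) (Node Ss) = (\<exists>S\<in>set Ss. shape_deep n S)"

lemma shape_full_SucD: "shape_full (Suc n) S \<Longrightarrow> shape_full n S"
  by (induct n arbitrary: S) (auto elim: shape_full.elims)

lemma shape_deep_SucD: "shape_deep (Suc n) S \<Longrightarrow> shape_deep n S"
proof (induct n arbitrary: S)
  case (Suc n)
  then show ?case by (cases S) auto
qed simp

lemma shape_full_Node_Nil: "shape_full n (Node [])"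
  by (cases n) auto

lemma shape_full_merge: "shape_full n S \<Longrightarrow> shape_full n T \<Longrightarrow> shape_full n (merge S T)"
proof (induct n arbitrary: S T)
  case (Suc n)
  then obtain Ss Ts where "S = Node Ss" and "T = Node Ts" by (cases S; cases T) auto
  with Suc show ?case by auto
qed simp

lemma shape_deep_merge:
  "shape_deep d S \<and> shape_full d T \<or> shape_full d S \<and> shape_deep d T \<Longrightarrow> shape_deep d (merge S T)"
proof (induct d arbitrary: S T)
  case (Suc d)
  then obtain Ss Ts where S: "S = Node Ss" and T: "T = Node Ts" by (cases S; cases T) auto
  let ?child = "\<lambda>j. if j < length Ss then if j < length Ts
      then merge (Ts ! j) (Ss ! j) else Ss ! j else Ts ! j"
  obtain j where "j < max (length Ss) (length Ts)" and "shape_deep d (?child j)"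
    using Suc.prems
  proof (elim disjE conjE)
    assume "shape_deep (Suc d) S" "shape_full (Suc d) T"
    then obtain i where i: "i < length Ss" "shape_deep d (Ss ! i)"
      and "\<forall>U\<in>set Ts. shape_full d U"
      by (auto simp: S T in_set_conv_nth)
    then have "shape_deep d (?child i)" using Suc.hyps[of "Ts ! i" "Ss ! i"] nth_mem by auto
    then show thesis using that[of i] i by simp
  next
    assume "shape_full (Suc d) S" "shape_deep (Suc d) T"
    then obtain i where i: "i < length Ts" "shape_deep d (Ts ! i)"
      and "\<forall>U\<in>set Ss. shape_full d U"
      by (auto simp: S T in_set_conv_nth)
    then have "shape_deep d (?child i)" using Suc.hyps[of "Ts ! i" "Ss ! i"] nth_mem by auto
    then show thesis using that[of i] i by simp
  qed
  then have "\<exists>U\<in>set (map ?child [0..<max (length Ss) (length Ts)]). shape_deep d U"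
    by (intro bexI[of _ "?child j"]) auto
  then show ?case by (simp only: S T merge.simps shape_deep.simps)
qed simp

lemma eta_exp_converse_hreds: "hred\<^sup>*\<^sup>* M M' \<Longrightarrow> eta_exp S x M' \<Longrightarrow> eta_exp S x M"
  by (cases S) (auto intro: rtranclp_trans)

lemma eta_exp_lift: "eta_exp S x M \<Longrightarrow> eta_exp S (if x < k then x else Suc x) (lift M k)"
proof (induct S x M arbitrary: k rule: eta_exp.induct)
  case (2 Ss x M)
  let ?m = "length Ss"
  from "2.prems" obtain Ms where h: "hred\<^sup>*\<^sup>* M (absn ?m (apps (Var (x + ?m)) Ms))"
    and l: "length Ms = ?m" and c: "\<forall>i<?m. eta_exp (Ss ! i) (?m - 1 - i) (Ms ! i)"
    by auto
  let ?x = "if x < k then x else Suc x"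
  have "hred\<^sup>*\<^sup>* (lift M k) (lift (absn ?m (apps (Var (x + ?m)) Ms)) k)"
    using h by (rule hreds_lift)
  then have h': "hred\<^sup>*\<^sup>* (lift M k) (absn ?m (apps (Var (?x + ?m)) (map (\<lambda>t. lift t (k + ?m)) Ms)))"
    by (cases "x < k") (simp_all add: lift_absn lift_apps)
  have "eta_exp (Ss ! i) (?m - 1 - i) (lift (Ms ! i) (k + ?m))" if "i < ?m" for i
  proof -
    have "?m - 1 - i < k + ?m" using that by arith
    then show ?thesis using "2.hyps"[OF that, of Ms "k + ?m"] c that by simp
  qed
  then show ?case using h' l by auto
qed simp

lemma eta_exp_liftn: "eta_exp S x M \<Longrightarrow> eta_exp S (x + n) (liftn n M)"
proof (induct n arbitrary: x M)
  case (Suc n)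
  then show ?case using Suc.hyps[OF eta_exp_lift[OF Suc.prems, of 0]] by simp
qed simp

lemma eta_exp_subst_other:
  "eta_exp S x M \<Longrightarrow> x \<noteq> k \<Longrightarrow> eta_exp S (if x < k then x else x - 1) (subst M N k)"
proof (induct S x M arbitrary: k N rule: eta_exp.induct)
  case (2 Ss x M)
  let ?m = "length Ss"
  from "2.prems" obtain Ms where h: "hred\<^sup>*\<^sup>* M (absn ?m (apps (Var (x + ?m)) Ms))"
    and l: "length Ms = ?m" and c: "\<forall>i<?m. eta_exp (Ss ! i) (?m - 1 - i) (Ms ! i)"
    by auto
  let ?x = "if x < k then x else x - 1"
  let ?N = "liftn ?m N"
  have "hred\<^sup>*\<^sup>* (subst M N k) (subst (absn ?m (apps (Var (x + ?m)) Ms)) N k)"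
    using h by (rule hreds_subst)
  then have h': "hred\<^sup>*\<^sup>* (subst M N k) (absn ?m (apps (Var (?x + ?m)) (map (\<lambda>t. subst t ?N (k + ?m)) Ms)))"
    using "2.prems"(2) by (auto simp add: subst_absn subst_apps)
  have "eta_exp (Ss ! i) (?m - 1 - i) (subst (Ms ! i) ?N (k + ?m))" if "i < ?m" for i
  proof -
    have "?m - 1 - i < k + ?m" using that by arith
    then show ?thesis using "2.hyps"[OF that, of Ms "k + ?m" ?N] c that by simp
  qed
  then show ?case using h' l by auto
qed simp

lemma eta_exp_NodeD:
  assumes "hred\<^sup>*\<^sup>* M (absn m (apps (Var (x + m)) Ms))" and "eta_exp (Node Ss) x M"
  shows "length Ss = m \<and> length Ms = m \<and> (\<forall>i<m. eta_exp (Ss ! i) (m - 1 - i) (Ms ! i))"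
proof -
  from assms(2) obtain Ms' where
    h': "hred\<^sup>*\<^sup>* M (absn (length Ss) (apps (Var (x + length Ss)) Ms'))"
    and "length Ms' = length Ss"
    and c: "\<forall>i<length Ss. eta_exp (Ss ! i) (length Ss - 1 - i) (Ms' ! i)" by auto
  have "m = length Ss" and "Ms = Ms'"
    using absn_apps_Var_inject[OF hreds_hnf_unique[OF assms(1) h' is_hnf_absn_apps_Var
          is_hnf_absn_apps_Var]] by simp_all
  then show ?thesis using c \<open>length Ms' = length Ss\<close> by simp
qed

section \<open>Substitution of \<eta>-expansions\<close>

text \<open>Applying an \<eta>-expansion to arguments one at a time passes through terms whose head
  arguments \<eta>-expand arbitrary variables \<open>xs\<close>, no longer the bound ones in order.\<close>

definition eta_spine :: "nat \<Rightarrow> nat \<Rightarrow> shape list \<Rightarrow> nat list \<Rightarrow> trm \<Rightarrow> bool" where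
  "eta_spine k z Ss xs M \<longleftrightarrow> length xs = length Ss \<and>
     (\<exists>Ms. hred\<^sup>*\<^sup>* M (absn k (apps (Var (z + k)) Ms)) \<and> length Ms = length Ss
        \<and> (\<forall>j<length Ss. eta_exp (Ss ! j) (xs ! j) (Ms ! j)))"

lemma eta_exp_Node_iff_spine:
  "eta_exp (Node Ss) x M \<longleftrightarrow> eta_spine (length Ss) x Ss (map (\<lambda>j. length Ss - 1 - j) [0..<length Ss]) M"
  by (auto simp: eta_spine_def)

lemma eta_spine_absn: "eta_spine k (z + n) Ss xs M \<Longrightarrow> eta_spine (n + k) z Ss xs (absn n M)"
  unfolding eta_spine_def by (auto simp: absn_add add.assoc dest: hreds_absn[of _ _ n])

lemma eta_spineI:
  "hred\<^sup>*\<^sup>* M (absn k (apps (Var (z + k)) Ms)) \<Longrightarrow> length Ms = length Ss \<Longrightarrow> length xs = length Ss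
    \<Longrightarrow> (\<And>j. j < length Ss \<Longrightarrow> eta_exp (Ss ! j) (xs ! j) (Ms ! j)) \<Longrightarrow> eta_spine k z Ss xs M"
  unfolding eta_spine_def by blast

lemma eta_spine_App_Abs:
  assumes P: "eta_spine (Suc k) z Ss xs P" and V: "eta_exp S v V"
    and merge_subst: "\<And>j A B w. j < length Ss \<Longrightarrow> xs ! j = k \<Longrightarrow> eta_exp (Ss ! j) k A
      \<Longrightarrow> eta_exp S w B \<Longrightarrow> eta_exp (merge (Ss ! j) S) w (subst A B k)"
  shows "eta_spine k z (map (\<lambda>j. if xs ! j = k then merge (Ss ! j) S else Ss ! j) [0..<length Ss])
    (map (\<lambda>j. if xs ! j = k then v + k else if xs ! j < k then xs ! j else xs ! j - 1) [0..<length Ss])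
    (App P V)"
    (is "eta_spine k z ?Ss ?xs (App P V)")
proof -
  obtain Ms where hP: "hred\<^sup>*\<^sup>* P (Abs (absn k (apps (Var (z + Suc k)) Ms)))"
    and l: "length Ms = length Ss" and lx: "length xs = length Ss"
    and A: "\<forall>j<length Ss. eta_exp (Ss ! j) (xs ! j) (Ms ! j)"
    using P unfolding eta_spine_def by auto
  let ?f = "\<lambda>u. subst u (liftn k V) k"
  have "hred\<^sup>*\<^sup>* (App P V) (subst (absn k (apps (Var (z + Suc k)) Ms)) V 0)"
    using hP by (rule hreds_App_Abs)
  then have red: "hred\<^sup>*\<^sup>* (App P V) (absn k (apps (Var (z + k)) (map ?f Ms)))"
    by (simp add: subst_absn subst_apps)
  have V': "eta_exp S (v + k) (liftn k V)" using V by (rule eta_exp_liftn)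
  have child: "eta_exp (?Ss ! j) (?xs ! j) (map ?f Ms ! j)" if j: "j < length Ss" for j
  proof (cases "xs ! j = k")
    case True
    with A j have "eta_exp (Ss ! j) k (Ms ! j)" by metis
    with merge_subst[OF j True _ V'] True j l show ?thesis by simp
  next
    case False
    with A j have "eta_exp (Ss ! j) (xs ! j) (Ms ! j)" by blast
    with eta_exp_subst_other[OF this False, of "liftn k V"] False j l show ?thesis
      by (cases "xs ! j < k") simp_all
  qed
  show ?thesis
  proof (rule eta_spineI[OF red])
    fix j
    assume "j < length ?Ss"
    then show "eta_exp (?Ss ! j) (?xs ! j) (map ?f Ms ! j)" by (intro child) simp
  qed (simp_all add: l lx)
qed

lemma eta_spine_App:
  assumes "eta_spine 0 z Ss xs P" and V: "eta_exp S v V"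
  shows "eta_spine 0 z (Ss @ [S]) (xs @ [v]) (App P V)"
proof -
  obtain Ms where red: "hred\<^sup>*\<^sup>* P (apps (Var z) Ms)"
    and l: "length Ms = length Ss" and lx: "length xs = length Ss"
    and A: "\<forall>j<length Ss. eta_exp (Ss ! j) (xs ! j) (Ms ! j)"
    using assms(1) unfolding eta_spine_def by auto
  have "hred\<^sup>*\<^sup>* (App P V) (absn 0 (apps (Var (z + 0)) (Ms @ [V])))"
    using hreds_App[OF red is_abs_apps_Var] by simp
  then show ?thesis
  proof (rule eta_spineI)
    fix j
    assume "j < length (Ss @ [S])"
    then consider "j < length Ss" | "j = length Ss" by fastforce
    then show "eta_exp ((Ss @ [S]) ! j) ((xs @ [v]) ! j) ((Ms @ [V]) ! j)"
      by cases (use A V l lx in \<open>simp_all add: nth_append\<close>)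
  qed (simp_all add: l lx)
qed

text \<open>Shapes and variables of the head arguments once an \<eta>-expansion along \<open>Node Ts\<close> has been
  applied to the first \<open>i\<close> of \<open>m\<close> arguments, the \<open>j\<close>-th of which \<eta>-expands the bound
  variable \<open>m - 1 - j\<close> along \<open>Ss ! j\<close>.\<close>

definition app_shapes :: "shape list \<Rightarrow> shape list \<Rightarrow> nat \<Rightarrow> shape list" where
  "app_shapes Ss Ts i = map (\<lambda>j. if j < i then if j < length Ts then merge (Ts ! j) (Ss ! j) else Ss ! j
     else Ts ! j) [0..<max i (length Ts)]"

definition app_vars :: "nat \<Rightarrow> nat \<Rightarrow> nat \<Rightarrow> nat list" where
  "app_vars m l i = map (\<lambda>j. if j < i then m - 1 - j + (l - i) else l - 1 - j) [0..<max i l]"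

lemma app_vars_eq_iff:
  assumes "i < l" and "j < l"
  shows "app_vars m l i ! j = l - Suc i \<longleftrightarrow> j = i"
    and "app_vars m l i ! j < l - Suc i \<longleftrightarrow> i < j"
  using assms by (cases "j < i"; simp add: app_vars_def; linarith)+

lemma app_shapes_Suc:
  assumes "i < length Ts"
  shows "app_shapes Ss Ts (Suc i) = map (\<lambda>j. if app_vars m (length Ts) i ! j = length Ts - Suc i
    then merge (app_shapes Ss Ts i ! j) (Ss ! i) else app_shapes Ss Ts i ! j) [0..<length Ts]"
proof (rule nth_equalityI)
  fix j
  assume "j < length (app_shapes Ss Ts (Suc i))"
  then have "j < length Ts" using assms by (simp add: app_shapes_def)
  then show "app_shapes Ss Ts (Suc i) ! j = map (\<lambda>j. if app_vars m (length Ts) i ! j = length Ts - Suc i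
      then merge (app_shapes Ss Ts i ! j) (Ss ! i) else app_shapes Ss Ts i ! j) [0..<length Ts] ! j"
    using assms app_vars_eq_iff(1)[OF assms] by (simp add: app_shapes_def less_Suc_eq)
qed (use assms in \<open>simp add: app_shapes_def\<close>)

lemma app_vars_Suc:
  assumes "i < l"
  shows "app_vars m l (Suc i) = map (\<lambda>j. if app_vars m l i ! j = l - Suc i then m - 1 - i + (l - Suc i)
    else if app_vars m l i ! j < l - Suc i then app_vars m l i ! j else app_vars m l i ! j - 1) [0..<l]"
proof (rule nth_equalityI)
  fix j
  assume "j < length (app_vars m l (Suc i))"
  then have j: "j < l" using assms by (simp add: app_vars_def)
  have "app_vars m l i ! j = (if j < i then m - 1 - j + (l - i) else l - 1 - j)"
    using j by (simp add: app_vars_def)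
  then show "app_vars m l (Suc i) ! j = map (\<lambda>j. if app_vars m l i ! j = l - Suc i
      then m - 1 - i + (l - Suc i) else if app_vars m l i ! j < l - Suc i then app_vars m l i ! j
      else app_vars m l i ! j - 1) [0..<l] ! j"
    using assms j app_vars_eq_iff[OF assms j] by (cases "j < i") (auto simp: app_vars_def less_Suc_eq)
qed (use assms in \<open>simp add: app_vars_def\<close>)

lemma eta_spine_app_Abs_step:
  assumes P: "eta_spine (length Ts - i) z (app_shapes Ss Ts i) (app_vars m (length Ts) i) P"
    and V: "eta_exp (Ss ! i) (m - 1 - i) V" and i: "i < length Ts"
    and merge_subst: "\<And>K w A B. eta_exp (Ts ! i) K A \<Longrightarrow> eta_exp (Ss ! i) w B
      \<Longrightarrow> eta_exp (merge (Ts ! i) (Ss ! i)) w (subst A B K)"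
  shows "eta_spine (length Ts - Suc i) z (app_shapes Ss Ts (Suc i)) (app_vars m (length Ts) (Suc i))
    (App P V)"
proof -
  let ?l = "length Ts"
  have len: "length (app_shapes Ss Ts i) = ?l" using i by (simp add: app_shapes_def)
  have P': "eta_spine (Suc (?l - Suc i)) z (app_shapes Ss Ts i) (app_vars m ?l i) P"
    using P i by (simp add: Suc_diff_Suc)
  have merge_subst': "eta_exp (merge (app_shapes Ss Ts i ! j) (Ss ! i)) w (subst A B (?l - Suc i))"
    if "j < length (app_shapes Ss Ts i)" and "app_vars m ?l i ! j = ?l - Suc i"
      and "eta_exp (app_shapes Ss Ts i ! j) (?l - Suc i) A" and "eta_exp (Ss ! i) w B" for j A B w
  proof -
    have "j = i" using that(1,2) app_vars_eq_iff(1)[OF i] len by simp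
    moreover have "app_shapes Ss Ts i ! i = Ts ! i" using i by (simp add: app_shapes_def)
    ultimately show ?thesis using merge_subst that(3,4) by simp
  qed
  show ?thesis using eta_spine_App_Abs[OF P' V merge_subst']
    unfolding app_shapes_Suc[OF i, of Ss m] app_vars_Suc[OF i] len .
qed

lemma eta_spine_app_step:
  assumes "eta_spine 0 z (app_shapes Ss Ts i) (app_vars m (length Ts) i) P"
    and "eta_exp (Ss ! i) (m - 1 - i) V" and "length Ts \<le> i"
  shows "eta_spine 0 z (app_shapes Ss Ts (Suc i)) (app_vars m (length Ts) (Suc i)) (App P V)"
proof -
  have "app_shapes Ss Ts (Suc i) = app_shapes Ss Ts i @ [Ss ! i]"
    and "app_vars m (length Ts) (Suc i) = app_vars m (length Ts) i @ [m - 1 - i]"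
    using \<open>length Ts \<le> i\<close> by (simp_all add: app_shapes_def app_vars_def max_def)
  then show ?thesis using eta_spine_App[OF assms(1,2)] by simp
qed

lemma eta_spine_apps:
  assumes merge_subst: "\<And>j K w A B. j < length Ss \<Longrightarrow> j < length Ts \<Longrightarrow> eta_exp (Ts ! j) K A
      \<Longrightarrow> eta_exp (Ss ! j) w B \<Longrightarrow> eta_exp (merge (Ts ! j) (Ss ! j)) w (subst A B K)"
    and P: "eta_exp (Node Ts) (y + m) P"
    and Vs: "length Vs = m" "length Ss = m" "\<forall>j<m. eta_exp (Ss ! j) (m - 1 - j) (Vs ! j)"
  shows "i \<le> m \<Longrightarrow> eta_spine (length Ts - i) (y + m) (app_shapes Ss Ts i) (app_vars m (length Ts) i)
    (apps P (take i Vs))"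
proof (induct i)
  case 0
  show ?case using P[unfolded eta_exp_Node_iff_spine]
    by (simp only: app_shapes_def app_vars_def not_less0 if_False max_0L map_nth take_0
        apps.simps(1) diff_zero)
next
  case (Suc i)
  then have IH: "eta_spine (length Ts - i) (y + m) (app_shapes Ss Ts i) (app_vars m (length Ts) i)
      (apps P (take i Vs))" by simp
  have apps: "apps P (take (Suc i) Vs) = App (apps P (take i Vs)) (Vs ! i)"
    using Suc.prems Vs(1) by (simp add: take_Suc_conv_app_nth)
  have V: "eta_exp (Ss ! i) (m - 1 - i) (Vs ! i)" using Vs(3) Suc.prems by simp
  have "i < length Ss" using Suc.prems Vs(2) by simp
  show ?case
  proof (cases "i < length Ts")
    case True
    then show ?thesis
      unfolding apps by (rule eta_spine_app_Abs_step[OF IH V _ merge_subst[OF \<open>i < length Ss\<close> True]])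
  next
    case False
    then show ?thesis using eta_spine_app_step[OF _ V] IH unfolding apps by simp
  qed
qed

text \<open>The hypothesis \<open>merge_subst\<close> is the induction hypothesis of \<open>eta_exp_subst_merge\<close>
  for the pairs of children.\<close>

lemma eta_exp_absn_apps_Node:
  assumes merge_subst: "\<And>j K w A B. j < length Ss \<Longrightarrow> j < length Ts \<Longrightarrow> eta_exp (Ts ! j) K A
      \<Longrightarrow> eta_exp (Ss ! j) w B \<Longrightarrow> eta_exp (merge (Ts ! j) (Ss ! j)) w (subst A B K)"
    and P: "eta_exp (Node Ts) (y + m) P"
    and Vs: "length Vs = m" "length Ss = m" "\<forall>j<m. eta_exp (Ss ! j) (m - 1 - j) (Vs ! j)"
  shows "eta_exp (merge (Node Ss) (Node Ts)) y (absn m (apps P Vs))"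
proof -
  let ?l = "length Ts" and ?Rs = "app_shapes Ss Ts m"
  have "eta_spine (?l - m) (y + m) ?Rs (app_vars m ?l m) (apps P Vs)"
    using eta_spine_apps[OF merge_subst P Vs le_refl] Vs(1) by simp
  then have "eta_spine (m + (?l - m)) y ?Rs (app_vars m ?l m) (absn m (apps P Vs))"
    by (rule eta_spine_absn)
  moreover have "m + (?l - m) = length ?Rs" by (simp add: app_shapes_def)
  moreover have "app_vars m ?l m = map (\<lambda>j. length ?Rs - 1 - j) [0..<length ?Rs]"
    unfolding app_vars_def app_shapes_def by (rule map_cong) auto
  ultimately have "eta_exp (Node ?Rs) y (absn m (apps P Vs))"
    unfolding eta_exp_Node_iff_spine by (simp only:)
  moreover have "merge (Node Ss) (Node Ts) = Node ?Rs" using Vs(2) by (simp add: app_shapes_def)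
  ultimately show ?thesis by (simp only:)
qed

text \<open>\<open>M[N/x]\<close> head-reduces to \<open>N\<close> applied to the expansions of the bound variables of \<open>M\<close>,
  and each resulting \<beta>-step substitutes into \<open>N\<close>'s expansions along smaller shapes.\<close>

theorem eta_exp_subst_merge:
  "eta_exp S k M \<Longrightarrow> eta_exp T y N \<Longrightarrow> eta_exp (merge S T) y (subst M N k)"
proof (induct "size S + size T" arbitrary: S T k y M N rule: less_induct)
  case less
  show ?case
  proof (cases S)
    case (Node Ss)
    show ?thesis
    proof (cases T)
      case (Node Ts)
      let ?m = "length Ss"
      from less.prems(1) obtain Ms where hM: "hred\<^sup>*\<^sup>* M (absn ?m (apps (Var (k + ?m)) Ms))"
        and lM: "length Ms = ?m" and Ms: "\<forall>i<?m. eta_exp (Ss ! i) (?m - 1 - i) (Ms ! i)"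
        unfolding \<open>S = Node Ss\<close> by auto
      let ?N = "liftn ?m N"
      let ?g = "\<lambda>t. subst t ?N (k + ?m)"
      have "hred\<^sup>*\<^sup>* (subst M N k) (subst (absn ?m (apps (Var (k + ?m)) Ms)) N k)"
        using hM by (rule hreds_subst)
      then have red: "hred\<^sup>*\<^sup>* (subst M N k) (absn ?m (apps ?N (map ?g Ms)))"
        by (simp add: subst_absn subst_apps)
      have N: "eta_exp (Node Ts) (y + ?m) ?N" using eta_exp_liftn[OF less.prems(2)] Node by simp
      have args: "\<forall>i<?m. eta_exp (Ss ! i) (?m - 1 - i) (map ?g Ms ! i)"
      proof (intro allI impI)
        fix i assume i: "i < ?m"
        then have "?m - 1 - i < k + ?m" by arith
        then show "eta_exp (Ss ! i) (?m - 1 - i) (map ?g Ms ! i)"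
          using eta_exp_subst_other[of "Ss ! i" "?m - 1 - i" "Ms ! i" "k + ?m" ?N] Ms i lM by simp
      qed
      have smaller: "eta_exp (merge (Ts ! j) (Ss ! j)) w (subst A B K)"
        if "j < ?m" "j < length Ts" "eta_exp (Ts ! j) K A" "eta_exp (Ss ! j) w B" for j K w A B
      proof -
        have "size (Ts ! j) + size (Ss ! j) < size S + size T"
          using size_nth_less[OF that(1)] size_nth_less[OF that(2)] \<open>S = Node Ss\<close> Node by simp
        then show ?thesis using less.hyps that(3,4) by blast
      qed
      have "eta_exp (merge (Node Ss) (Node Ts)) y (absn ?m (apps ?N (map ?g Ms)))"
        by (rule eta_exp_absn_apps_Node[OF smaller N]) (use lM args in simp_all)
      then show ?thesis unfolding \<open>S = Node Ss\<close> Node by (rule eta_exp_converse_hreds[OF red])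
    qed (simp add: Node)
  qed simp
qed

lemma eta_exp_absn_apps:
  assumes "eta_exp T (y + m) P" and "length Vs = m" and "length Ss = m"
    and "\<forall>j<m. eta_exp (Ss ! j) (m - 1 - j) (Vs ! j)"
  shows "eta_exp (merge (Node Ss) T) y (absn m (apps P Vs))"
proof (cases T)
  case (Node Ts)
  then show ?thesis using eta_exp_absn_apps_Node[OF eta_exp_subst_merge] assms by simp
qed simp

section \<open>\<eta>-expansions and Boehm trees\<close>

lemma eta_le_Nd_Nil_iff:
  "eta_le (Nd n y []) V \<longleftrightarrow>
    (\<exists>m Vs. V = Nd (n + m) (y + m) Vs \<and> list_all2 eta_le (map (\<lambda>j. Nd 0 j []) (rev [0..<m])) Vs)"
  by (subst eta_le.simps) auto

definition eta_expansion :: "nat \<Rightarrow> trm \<Rightarrow> bool" where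
  "eta_expansion x M \<longleftrightarrow> (\<forall>n. \<exists>S. shape_full n S \<and> eta_exp S x M)"

lemma eta_expansion_hnfE:
  assumes "eta_expansion x M"
  obtains m Ms where "hred\<^sup>*\<^sup>* M (absn m (apps (Var (x + m)) Ms))" and "length Ms = m"
    and "\<forall>i<m. eta_expansion (m - 1 - i) (Ms ! i)"
proof -
  from assms obtain S where "shape_full 1 S" "eta_exp S x M" unfolding eta_expansion_def by blast
  moreover from this obtain Ss where "S = Node Ss" by (cases S) auto
  ultimately obtain Ms where hM: "hred\<^sup>*\<^sup>* M (absn (length Ss) (apps (Var (x + length Ss)) Ms))"
    and lM: "length Ms = length Ss" by auto
  have "eta_expansion (length Ss - 1 - i) (Ms ! i)" if i: "i < length Ss" for i
    unfolding eta_expansion_def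
  proof
    fix n
    from assms obtain S' where full: "shape_full (Suc n) S'" and S': "eta_exp S' x M"
      unfolding eta_expansion_def by blast
    then obtain Ss' where Ss': "S' = Node Ss'" by (cases S') auto
    with S' have "length Ss' = length Ss \<and> (\<forall>i<length Ss. eta_exp (Ss' ! i) (length Ss - 1 - i) (Ms ! i))"
      using eta_exp_NodeD[OF hM] by blast
    moreover from this have "shape_full n (Ss' ! i)" using full Ss' i by auto
    ultimately show "\<exists>S. shape_full n S \<and> eta_exp S (length Ss - 1 - i) (Ms ! i)" using i by blast
  qed
  then show ?thesis using that[OF hM lM] by blast
qed

lemma eta_le_leaf_BT_shape_full:
  "eta_le (Nd 0 x []) (BT M) \<Longrightarrow> \<exists>S. shape_full n S \<and> eta_exp S x M"
proof (induct n arbitrary: x M)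
  case 0
  show ?case by (rule exI[of _ Leaf]) simp
next
  case (Suc n)
  from Suc.prems obtain m Vs where bt: "BT M = Nd m (x + m) Vs"
    and Vs: "list_all2 eta_le (map (\<lambda>j. Nd 0 j []) (rev [0..<m])) Vs"
    unfolding eta_le_Nd_Nil_iff by auto
  obtain Ms where hM: "hred\<^sup>*\<^sup>* M (absn m (apps (Var (x + m)) Ms))" and "Vs = map BT Ms"
    using bt by (rule BT_NdE)
  with Vs have lM: "length Ms = m" and "\<forall>i<m. eta_le (Nd 0 (m - 1 - i) []) (BT (Ms ! i))"
    by (auto simp: list_all2_conv_all_nth rev_nth)
  then have "\<forall>i. \<exists>S. i < m \<longrightarrow> shape_full n S \<and> eta_exp S (m - 1 - i) (Ms ! i)"
    using Suc.hyps by blast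
  then obtain f where f: "\<forall>i<m. shape_full n (f i) \<and> eta_exp (f i) (m - 1 - i) (Ms ! i)"
    by metis
  have "shape_full (Suc n) (Node (map f [0..<m])) \<and> eta_exp (Node (map f [0..<m])) x M"
    using f hM lM by auto
  then show ?case by blast
qed

lemma eta_expansion_imp_eta_le_leaf_BT:
  assumes "eta_expansion x M"
  shows "eta_le (Nd 0 x []) (BT M)"
  using assms
proof (coinduction arbitrary: x M rule: eta_le.coinduct)
  case eta_le
  then obtain m Ms where hM: "hred\<^sup>*\<^sup>* M (absn m (apps (Var (x + m)) Ms))" and lM: "length Ms = m"
    and Ms: "\<forall>i<m. eta_expansion (m - 1 - i) (Ms ! i)"
    by (rule eta_expansion_hnfE)
  have "list_all2 (\<lambda>U V. (\<exists>x M. U = Nd 0 x [] \<and> V = BT M \<and> eta_expansion x M) \<or> eta_le U V)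
      (map (\<lambda>j. Nd 0 j []) (rev [0..<m])) (map BT Ms)"
    using Ms lM by (auto simp: list_all2_conv_all_nth rev_nth)
  then show ?case using BT_of_hreds_hnf[OF hM] by (auto intro!: exI[of _ "[]"])
qed

theorem eta_le_leaf_BT_iff: "eta_le (Nd 0 x []) (BT M) \<longleftrightarrow> eta_expansion x M"
  using eta_le_leaf_BT_shape_full eta_expansion_imp_eta_le_leaf_BT
  unfolding eta_expansion_def by blast

fun bt_deep :: "nat \<Rightarrow> bt \<Rightarrow> bool" where
  "bt_deep 0 T = True"
| "bt_deep (Suc d) Bot = False"
| "bt_deep (Suc d) (Nd n y Ts) = (\<exists>T\<in>set Ts. bt_deep d T)"

lemma bt_deep_mono: "bt_deep d' T \<Longrightarrow> d \<le> d' \<Longrightarrow> bt_deep d T"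
proof (induct d' arbitrary: d T)
  case (Suc d')
  then show ?case by (cases d; cases T) auto
qed simp

lemma bt_finite_iff_not_deep: "bt_finite T \<longleftrightarrow> (\<exists>d. \<not> bt_deep d T)"
proof
  assume "bt_finite T"
  then show "\<exists>d. \<not> bt_deep d T"
  proof (induct rule: bt_finite.induct)
    case (2 Ts n y)
    then obtain f where f: "\<forall>T\<in>set Ts. \<not> bt_deep (f T) T" by metis
    let ?D = "Max (insert 0 (f ` set Ts))"
    have "\<forall>T\<in>set Ts. \<not> bt_deep ?D T" using f bt_deep_mono by (meson List.finite_set Max_ge finite_imageI finite_insert image_eqI insertCI)
    then show ?case by (intro exI[of _ "Suc ?D"]) simp
  qed (auto intro: exI[of _ 1])
next
  assume "\<exists>d. \<not> bt_deep d T"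
  then obtain d where "\<not> bt_deep d T" by blast
  then show "bt_finite T"
  proof (induct d arbitrary: T)
    case (Suc d)
    show ?case
    proof (cases T)
      case (Nd n y Ts)
      then show ?thesis using Suc by (auto intro!: bt_finite.intros(2))
    qed (simp add: bt_finite.intros(1))
  qed simp
qed

lemma eta_exp_bt_deep: "eta_exp S x M \<Longrightarrow> shape_deep d S \<Longrightarrow> bt_deep d (BT M)"
proof (induct d arbitrary: S x M)
  case (Suc d)
  then obtain Ss where S: "S = Node Ss" by (cases S) auto
  from Suc.prems obtain Ms where hM: "hred\<^sup>*\<^sup>* M (absn (length Ss) (apps (Var (x + length Ss)) Ms))"
    and lM: "length Ms = length Ss"
    and Ms: "\<forall>i<length Ss. eta_exp (Ss ! i) (length Ss - 1 - i) (Ms ! i)"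
    unfolding S by auto
  from Suc.prems obtain i where i: "i < length Ss" "shape_deep d (Ss ! i)"
    unfolding S by (auto simp: in_set_conv_nth)
  have "bt_deep d (BT (Ms ! i))" using Suc.hyps Ms i by blast
  then show ?case using BT_of_hreds_hnf[OF hM] i lM by auto
qed simp

lemma bt_deep_imp_shape_deep:
  "eta_exp S x M \<Longrightarrow> shape_full d S \<Longrightarrow> bt_deep d (BT M) \<Longrightarrow> shape_deep d S"
proof (induct d arbitrary: S x M)
  case (Suc d)
  then obtain Ss where S: "S = Node Ss" by (cases S) auto
  from Suc.prems obtain Ms where hM: "hred\<^sup>*\<^sup>* M (absn (length Ss) (apps (Var (x + length Ss)) Ms))"
    and lM: "length Ms = length Ss"
    and Ms: "\<forall>i<length Ss. eta_exp (Ss ! i) (length Ss - 1 - i) (Ms ! i)"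
    unfolding S by auto
  from Suc.prems(3) obtain i where i: "i < length Ss" "bt_deep d (BT (Ms ! i))"
    unfolding BT_of_hreds_hnf[OF hM] using lM by (auto simp: in_set_conv_nth)
  have "shape_full d (Ss ! i)" using Suc.prems(2) S i by auto
  then have "shape_deep d (Ss ! i)" using Suc.hyps Ms i by blast
  then show ?case using S i by auto
qed simp

theorem eta_expansion_infinite_iff:
  assumes "eta_expansion x M"
  shows "\<not> bt_finite (BT M) \<longleftrightarrow> (\<forall>d. \<exists>S. shape_full d S \<and> shape_deep d S \<and> eta_exp S x M)"
proof
  assume "\<not> bt_finite (BT M)"
  then have "bt_deep d (BT M)" for d using bt_finite_iff_not_deep by blast
  then show "\<forall>d. \<exists>S. shape_full d S \<and> shape_deep d S \<and> eta_exp S x M"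
    using assms bt_deep_imp_shape_deep unfolding eta_expansion_def by metis
next
  assume "\<forall>d. \<exists>S. shape_full d S \<and> shape_deep d S \<and> eta_exp S x M"
  then show "\<not> bt_finite (BT M)" using eta_exp_bt_deep bt_finite_iff_not_deep by blast
qed

lemma BT_of_hreds_Abs:
  assumes "hred\<^sup>*\<^sup>* Q (Abs t)" and "BT t = Nd n y Ts"
  shows "BT Q = Nd (Suc n) y Ts"
proof -
  obtain Ms where "hred\<^sup>*\<^sup>* t (absn n (apps (Var y) Ms))" and "Ts = map BT Ms"
    using assms(2) by (rule BT_NdE)
  moreover from this have "hred\<^sup>*\<^sup>* Q (absn (Suc n) (apps (Var y) Ms))"
    using assms(1) by (auto intro: rtranclp_trans hreds_Abs)
  ultimately show ?thesis using BT_of_hreds_hnf by blast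
qed

theorem E_omega_iff: "Q \<in> E_omega \<longleftrightarrow> (\<exists>t. hred\<^sup>*\<^sup>* Q (Abs t) \<and> eta_expansion 0 t)"
proof
  assume "Q \<in> E_omega"
  then obtain m Vs where bt: "BT Q = Nd (Suc m) m Vs"
    and Vs: "list_all2 eta_le (map (\<lambda>j. Nd 0 j []) (rev [0..<m])) Vs"
    unfolding E_omega_def BT_lamI mem_Collect_eq eta_le_Nd_Nil_iff by auto
  obtain Ms where hQ: "hred\<^sup>*\<^sup>* Q (Abs (absn m (apps (Var m) Ms)))" and "Vs = map BT Ms"
    using bt by (auto elim: BT_NdE)
  moreover have "BT (absn m (apps (Var (0 + m)) Ms)) = Nd (0 + m) (0 + m) (map BT Ms)"
    by (rule BT_of_hreds_hnf) simp
  ultimately have "eta_le (Nd 0 0 []) (BT (absn m (apps (Var m) Ms)))"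
    using Vs unfolding eta_le_Nd_Nil_iff by auto
  then show "\<exists>t. hred\<^sup>*\<^sup>* Q (Abs t) \<and> eta_expansion 0 t"
    using hQ eta_le_leaf_BT_iff by blast
next
  assume "\<exists>t. hred\<^sup>*\<^sup>* Q (Abs t) \<and> eta_expansion 0 t"
  then obtain t where hQ: "hred\<^sup>*\<^sup>* Q (Abs t)" and "eta_le (Nd 0 0 []) (BT t)"
    using eta_le_leaf_BT_iff by blast
  then obtain m Vs where "BT t = Nd m m Vs"
    and Vs: "list_all2 eta_le (map (\<lambda>j. Nd 0 j []) (rev [0..<m])) Vs"
    unfolding eta_le_Nd_Nil_iff by auto
  then have "BT Q = Nd (1 + m) (0 + m) Vs" using BT_of_hreds_Abs[OF hQ] by simp
  then show "Q \<in> E_omega"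
    unfolding E_omega_def BT_lamI mem_Collect_eq eta_le_Nd_Nil_iff using Vs by blast
qed

lemma E_inf_iff:
  assumes "hred\<^sup>*\<^sup>* Q (Abs t)" and "eta_expansion 0 t"
  shows "Q \<in> E_inf \<longleftrightarrow> \<not> bt_finite (BT t)"
proof -
  obtain m Ms where "hred\<^sup>*\<^sup>* t (absn m (apps (Var (0 + m)) Ms))"
    using assms(2) by (rule eta_expansion_hnfE)
  then have "BT t = Nd m m (map BT Ms)" by (simp add: BT_of_hreds_hnf)
  then have "bt_finite (BT Q) \<longleftrightarrow> bt_finite (BT t)"
    using BT_of_hreds_Abs[OF assms(1)] bt_finite.simps[of "Nd _ _ _"] by auto
  moreover have "Q \<in> E_omega" using assms E_omega_iff by blast
  ultimately show ?thesis unfolding E_inf_def by blast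
qed

section \<open>Composition and application to the identity\<close>

lemma hreds_bcomp: "hred\<^sup>*\<^sup>* (bcomp Q1 Q2) (Abs (App (lift Q1 0) (App (lift Q2 0) (Var 0))))"
proof -
  have s1: "hred (App lamB Q1) (Abs (Abs (App (lift (lift Q1 0) 0) (App (Var 1) (Var 0)))))"
    using hred.beta[of "Abs (Abs (App (Var 2) (App (Var 1) (Var 0))))" Q1] by (simp add: lamB_def)
  have s2: "hred (bcomp Q1 Q2) (App (Abs (Abs (App (lift (lift Q1 0) 0) (App (Var 1) (Var 0))))) Q2)"
    unfolding bcomp_def by (rule hred.appL[OF s1]) simp
  have "lift (lift Q1 0) 0 = lift (lift Q1 0) 1" using lift_lift[of 0 0 Q1] by simp
  then have s3: "hred (App (Abs (Abs (App (lift (lift Q1 0) 0) (App (Var 1) (Var 0))))) Q2)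
      (Abs (App (lift Q1 0) (App (lift Q2 0) (Var 0))))"
    using hred.beta[of "Abs (App (lift (lift Q1 0) 0) (App (Var 1) (Var 0)))" Q2] by simp
  show ?thesis using s2 s3 by (blast intro: rtranclp.rtrancl_into_rtrancl r_into_rtranclp)
qed

lemma eta_exp_App_lift:
  assumes "hred\<^sup>*\<^sup>* Q (Abs t)" and "eta_exp S 0 t" and "eta_exp T 0 N"
  shows "eta_exp (merge S T) 0 (App (lift Q 0) N)"
proof -
  have "hred\<^sup>*\<^sup>* (lift Q 0) (Abs (lift t 1))" using hreds_lift[OF assms(1), of 0] by simp
  then have "hred\<^sup>*\<^sup>* (App (lift Q 0) N) (subst (lift t 1) N 0)" by (rule hreds_App_Abs)
  moreover have "eta_exp S 0 (lift t 1)" using eta_exp_lift[OF assms(2), of 1] by simp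
  ultimately show ?thesis using eta_exp_subst_merge assms(3) eta_exp_converse_hreds by blast
qed

theorem bcomp_E_omega:
  assumes "Q1 \<in> E_omega" and "Q2 \<in> E_omega"
  shows "bcomp Q1 Q2 \<in> E_omega" and "Q1 \<in> E_inf \<or> Q2 \<in> E_inf \<Longrightarrow> bcomp Q1 Q2 \<in> E_inf"
proof -
  obtain t1 t2 where r1: "hred\<^sup>*\<^sup>* Q1 (Abs t1)" and E1: "eta_expansion 0 t1"
    and r2: "hred\<^sup>*\<^sup>* Q2 (Abs t2)" and E2: "eta_expansion 0 t2"
    using assms E_omega_iff by meson
  define R where "R = App (lift Q1 0) (App (lift Q2 0) (Var 0))"
  have R: "eta_exp (merge S1 (merge S2 (Node []))) 0 R" if "eta_exp S1 0 t1" "eta_exp S2 0 t2" for S1 S2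
    unfolding R_def using that r1 r2 by (intro eta_exp_App_lift) simp_all
  have "shape_full n (merge S1 (merge S2 (Node [])))" if "shape_full n S1" "shape_full n S2" for n S1 S2
    using that by (simp add: shape_full_merge shape_full_Node_Nil)
  then have ER: "eta_expansion 0 R" using E1 E2 R unfolding eta_expansion_def by meson
  show "bcomp Q1 Q2 \<in> E_omega" using E_omega_iff hreds_bcomp ER unfolding R_def by blast
  assume "Q1 \<in> E_inf \<or> Q2 \<in> E_inf"
  then have "\<not> bt_finite (BT t1) \<or> \<not> bt_finite (BT t2)" using E_inf_iff r1 r2 E1 E2 by blast
  then have "\<exists>S. shape_full d S \<and> shape_deep d S \<and> eta_exp S 0 R" for d
  proof
    assume "\<not> bt_finite (BT t1)"
    then obtain S1 where "shape_full d S1" "shape_deep d S1" "eta_exp S1 0 t1"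
      using eta_expansion_infinite_iff[OF E1] by blast
    moreover obtain S2 where "shape_full d S2" "eta_exp S2 0 t2" using E2 unfolding eta_expansion_def by blast
    ultimately show ?thesis
      using R shape_full_merge shape_deep_merge shape_full_Node_Nil by meson
  next
    assume "\<not> bt_finite (BT t2)"
    then obtain S2 where "shape_full d S2" "shape_deep d S2" "eta_exp S2 0 t2"
      using eta_expansion_infinite_iff[OF E2] by blast
    moreover obtain S1 where "shape_full d S1" "eta_exp S1 0 t1" using E1 unfolding eta_expansion_def by blast
    ultimately show ?thesis
      using R shape_full_merge shape_deep_merge shape_full_Node_Nil by meson
  qed
  then show "bcomp Q1 Q2 \<in> E_inf"
    using E_inf_iff[OF hreds_bcomp] eta_expansion_infinite_iff[OF ER] ER unfolding R_def by blast
qed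

lemma lift_lamI [simp]: "lift lamI k = lamI"
  by (simp add: lamI_def)

lemma liftn_lamI [simp]: "liftn n lamI = lamI"
  by (induct n) simp_all

lemma hreds_App_lamI:
  assumes "hred\<^sup>*\<^sup>* Q (Abs t)" and "hred\<^sup>*\<^sup>* t (absn (Suc m) (apps (Var (Suc m)) (M0 # Ms)))"
  shows "hred\<^sup>*\<^sup>* (App Q lamI)
    (Abs (absn m (apps (subst M0 lamI (Suc m)) (map (\<lambda>u. subst u lamI (Suc m)) Ms))))"
proof -
  let ?g = "\<lambda>u. subst u lamI (Suc m)"
  have "hred\<^sup>*\<^sup>* (App Q lamI) (subst t lamI 0)" using assms(1) by (rule hreds_App_Abs)
  also have "hred\<^sup>*\<^sup>* \<dots> (subst (absn (Suc m) (apps (Var (Suc m)) (M0 # Ms))) lamI 0)"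
    using assms(2) by (rule hreds_subst)
  also have "\<dots> = absn (Suc m) (apps (App lamI (?g M0)) (map ?g Ms))"
    by (simp add: subst_absn subst_apps)
  also have "hred\<^sup>*\<^sup>* \<dots> (absn (Suc m) (apps (?g M0) (map ?g Ms)))"
    using hred_apps[OF hred.beta[of "Var 0" "?g M0"]]
    by (intro hreds_absn r_into_rtranclp) (simp add: lamI_def)
  finally show ?thesis by simp
qed

lemma eta_exp_subst_lamI:
  assumes "hred\<^sup>*\<^sup>* t (absn (Suc m) (apps (Var (Suc m)) (M0 # Ms)))" and "eta_exp (Node (S0 # Ss)) 0 t"
  shows "eta_exp (merge (Node Ss) S0) 0
    (absn m (apps (subst M0 lamI (Suc m)) (map (\<lambda>u. subst u lamI (Suc m)) Ms)))"
proof -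
  let ?g = "\<lambda>u. subst u lamI (Suc m)"
  have "hred\<^sup>*\<^sup>* t (absn (Suc m) (apps (Var (0 + Suc m)) (M0 # Ms)))" using assms(1) by simp
  note args = eta_exp_NodeD[OF this assms(2)]
  have sub: "eta_exp ((S0 # Ss) ! i) (m - i) (?g ((M0 # Ms) ! i))" if "i < Suc m" for i
  proof -
    have A: "eta_exp ((S0 # Ss) ! i) (m - i) ((M0 # Ms) ! i)" using args that by simp
    have "m - i \<noteq> Suc m" and lt: "m - i < Suc m" by arith+
    from eta_exp_subst_other[OF A this(1), of lamI] show ?thesis by (simp only: lt if_True)
  qed
  show ?thesis
    by (rule eta_exp_absn_apps) (use sub[of 0] sub[of "Suc _"] args in auto)
qed

lemma shape_full_merge_Cons: "shape_full (Suc n) (Node (S0 # Ss)) \<Longrightarrow> shape_full n (merge (Node Ss) S0)"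
  by (auto intro!: shape_full_merge shape_full_SucD[of n "Node Ss"])

lemma shape_deep_merge_Cons:
  assumes "shape_full (Suc d) (Node (S0 # Ss))" and "shape_deep (Suc d) (Node (S0 # Ss))"
  shows "shape_deep d (merge (Node Ss) S0)"
proof -
  have "shape_full d (Node Ss)" and "shape_full d S0"
    using assms(1) shape_full_SucD[of d "Node Ss"] by auto
  moreover have "shape_deep d (Node Ss) \<or> shape_deep d S0"
    using assms(2) shape_deep_SucD[of d "Node Ss"] by auto
  ultimately show ?thesis using shape_deep_merge by blast
qed

theorem App_lamI_E_inf:
  assumes "Q \<in> E_inf"
  shows "App Q lamI \<in> E_inf"
proof -
  obtain t where hQ: "hred\<^sup>*\<^sup>* Q (Abs t)" and E: "eta_expansion 0 t"
    using assms E_omega_iff unfolding E_inf_def by blast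
  have inf: "\<not> bt_finite (BT t)" using E_inf_iff[OF hQ E] assms by blast
  obtain m Ms where ht: "hred\<^sup>*\<^sup>* t (absn m (apps (Var (0 + m)) Ms))" and lM: "length Ms = m"
    using E by (rule eta_expansion_hnfE)
  have "Ms \<noteq> []" using inf BT_of_hreds_hnf[OF ht] by (auto intro: bt_finite.intros)
  then obtain M0 Ms' m' where Ms: "Ms = M0 # Ms'" and m: "m = Suc m'" using lM by (cases Ms) auto
  define t' where "t' = absn m' (apps (subst M0 lamI (Suc m')) (map (\<lambda>u. subst u lamI (Suc m')) Ms'))"
  have ht': "hred\<^sup>*\<^sup>* t (absn (Suc m') (apps (Var (Suc m')) (M0 # Ms')))" using ht Ms m by simp
  have red: "hred\<^sup>*\<^sup>* (App Q lamI) (Abs t')" unfolding t'_def by (rule hreds_App_lamI[OF hQ ht'])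
  have Node: "\<exists>S0 Ss. S = Node (S0 # Ss)" if full: "shape_full (Suc n) S" and S: "eta_exp S 0 t"
    for n S
  proof -
    obtain Ss where "S = Node Ss" using full by (cases S) auto
    moreover have "length Ss = Suc m'" using eta_exp_NodeD[OF ht] S calculation m by simp
    ultimately show ?thesis by (cases Ss) auto
  qed
  have E': "eta_expansion 0 t'" unfolding eta_expansion_def
  proof
    fix n
    obtain S where "shape_full (Suc n) S" "eta_exp S 0 t" using E unfolding eta_expansion_def by blast
    then show "\<exists>S. shape_full n S \<and> eta_exp S 0 t'"
      using Node eta_exp_subst_lamI[OF ht'] shape_full_merge_Cons unfolding t'_def by metis
  qed
  have "\<exists>S. shape_full d S \<and> shape_deep d S \<and> eta_exp S 0 t'" for d
  proof -
    obtain S where "shape_full (Suc d) S" "shape_deep (Suc d) S" "eta_exp S 0 t"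
      using inf eta_expansion_infinite_iff[OF E] by blast
    then show ?thesis
      using Node eta_exp_subst_lamI[OF ht'] shape_full_merge_Cons shape_deep_merge_Cons
      unfolding t'_def by metis
  qed
  then show ?thesis using E_inf_iff[OF red E'] eta_expansion_infinite_iff[OF E'] by blast
qed

theorem mainTheorem6:
  shows "(\<forall>Q1 Q2. Q1 \<in> E_omega \<and> Q2 \<in> E_omega \<longrightarrow>
            bcomp Q1 Q2 \<in> E_omega \<and>
            ((Q1 \<in> E_inf \<or> Q2 \<in> E_inf) \<longrightarrow> bcomp Q1 Q2 \<in> E_inf))
       \<and> (\<forall>Q. Q \<in> E_inf \<longrightarrow> App Q lamI \<in> E_inf)"
  using bcomp_E_omega App_lamI_E_inf by blast

end
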